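(* Let $d\ge1$, $q\ge1$, let $\mathbf c_1,\dots,\mathbf c_q\in\mathbb R^d$, $w_1,\dots,w_q>0$, $c_s>0$ be a lattice satisfying the isotropy conditions stated in the context, and let $\mathbf h:\mathbb R^d\to\mathbb R^q$, $h_i(\mathbf u)=\sqrt{w_i}\big(1+\frac{\mathbf c_i\cdot\mathbf u}{2c_s^2}+\frac{(\mathbf c_i\cdot\mathbf u)^2}{8c_s^4}-\frac{\|\mathbf u\|^2}{4c_s^2}\big)$, and $\mathbf g(\rho,\mathbf u)=\sqrt\rho\,\mathbf h(\mathbf u)$ for $\rho\ge0$, $\mathbf u\in\mathbb R^d$. Let $\mathbf H=\nabla^2\mathbf h$ be the (constant) Hessian tensor, $H_{ikl}=\partial_k\partial_l h_i$, and $\|\mathbf H\|_2=\sup_{\|\mathbf a\|=\|\mathbf b\|=1}\big\|\big(\sum_{k,l}H_{ikl}a_kb_l\big)_{i=1}^q\big\|$. Fix a reference velocity $\hat{\mathbf u}\in\mathbb R^d$ such that $\bar J=[\mathbf h(\hat{\mathbf u}),\partial_1\mathbf h(\hat{\mathbf u}),\dots,\partial_d\mathbf h(\hat{\mathbf u})]\in\mathbb R^{q\times(d+1)}$ has full column rank, let $\hat V$ be its column space and $\mathcal D=\bar J(\bar J^\top\bar J)^{-1}\bar J^\top$ the orthogonal projector onto $\hat V$. Let $\tilde{\mathbf g}\in\mathbb R^q$ be arbitrary and $\hat\rho>0$ a reference density. Define $\mathcal E^\perp=\inf_{\rho\ge0,\,\mathbf u\in\mathbb R^d}\|\mathcal D\tilde{\mathbf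 g}-\mathbf g(\rho,\mathbf u)\|$, $\Delta=\|\sqrt{\hat\rho}\,\mathbf h(\hat{\mathbf u})-\tilde{\mathbf g}\|$, and $\beta=1/\sigma_{\min}(\nabla\mathbf g(\hat\rho,\hat{\mathbf u}))$, where $\nabla\mathbf g(\hat\rho,\hat{\mathbf u})=[\partial_\rho\mathbf g,\partial_{u_1}\mathbf g,\dots,\partial_{u_d}\mathbf g](\hat\rho,\hat{\mathbf u})\in\mathbb R^{q\times(d+1)}$ (which has full column rank) and $\sigma_{\min}$ is its smallest singular value. Let $\mathcal F(\rho,\mathbf u)=\mathcal D\,\mathbf g(\rho,\mathbf u)$ with Jacobian $D_{\mathcal F}$, let $\mathbf z_0=\nabla\mathbf g(\hat\rho,\hat{\mathbf u})^{+}\big(\mathcal F(\hat\rho,\hat{\mathbf u})-\mathcal D\tilde{\mathbf g}\big)$ (with $^{+}$ the Moore–Penrose pseudoinverse), $r=\|\mathbf z_0\|$, $(\rho_1,\mathbf u_1)=(\hat\rho,\hat{\mathbf u})-\mathbf z_0$, and $B$ the open ball in $\mathbb R^{1+d}$ of radius $r$ centered at $(\rho_1,\mathbf u_1)$. Assume (Newton–Kantorovich conditions) that $B\subset(0,\infty)\times\mathbb R^d$, that $D_{\mathcal F}$ is Lipschitz on $B$ with constant $\mu$ (in operator norm), and that $2\beta\mu r\le1$. Then $$\mathcal E^\perp\le 2\beta^2\Delta^2\|\mathbf H\|_2\sqrt{\hat\rho+2\beta\Delta}.$$ Furthermore, if $\mathbf h(\hat{\mathbf u})^\top\tilde{\mathbf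 g}>0$, then the choice $\sqrt{\hat\rho}=\mathbf h(\hat{\mathbf u})^\top\tilde{\mathbf g}/\|\mathbf h(\hat{\mathbf u})\|^2$ minimizes $\Delta$ over $\hat\rho>0$, and for this choice $\Delta=\|\tilde{\mathbf g}\|\,|\sin\theta|$, where $\cos\theta=\dfrac{\mathbf h(\hat{\mathbf u})^\top\tilde{\mathbf g}}{\|\mathbf h(\hat{\mathbf u})\|\,\|\tilde{\mathbf g}\|}$.
   Context: Isotropy conditions on the lattice: $\sum_i w_i=1$, $\sum_i w_i c_{ik}c_{il}=c_s^2\delta_{kl}$, $\sum_i w_i c_{ik}c_{il}c_{ip}c_{iq}=c_s^4(\delta_{kl}\delta_{pq}+\delta_{kp}\delta_{lq}+\delta_{kq}\delta_{lp})$, and all weighted velocity moments of orders 1, 3 and 5 vanish. Here $\mathbf g(\rho,\mathbf u)$ parametrizes the (second-order truncated) manifold of square-root equilibrium distributions, $\mathcal D$ is the "denoising" projector onto its tangent space at reference velocity $\hat{\mathbf u}$, and $\mathcal E^\perp$ is the distance from $\mathcal D\tilde{\mathbf g}$ to that manifold. *)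

theory Defs
  imports "HOL-Analysis.Analysis"
begin

definition kd :: "'a \<Rightarrow> 'a \<Rightarrow> real" where
  "kd k l = (if k = l then 1 else 0)"

definition lattice_isotropic :: "('q::finite \<Rightarrow> real^'d) \<Rightarrow> ('q \<Rightarrow> real) \<Rightarrow> real \<Rightarrow> bool" where
  "lattice_isotropic c w cs \<longleftrightarrow>
     cs > 0 \<and> (\<forall>i. w i > 0) \<and> (\<Sum>i\<in>UNIV. w i) = 1 \<and>
     (\<forall>k. (\<Sum>i\<in>UNIV. w i * c i $ k) = 0) \<and>
     (\<forall>k l. (\<Sum>i\<in>UNIV. w i * c i $ k * c i $ l) = cs^2 * kd k l) \<and>
     (\<forall>k l p. (\<Sum>i\<in>UNIV. w i * c i $ k * c i $ l * c i $ p) = 0) \<and>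
     (\<forall>k l p m. (\<Sum>i\<in>UNIV. w i * c i $ k * c i $ l * c i $ p * c i $ m)
                 = cs^4 * (kd k l * kd p m + kd k p * kd l m + kd k m * kd l p)) \<and>
     (\<forall>k l p m n. (\<Sum>i\<in>UNIV. w i * c i $ k * c i $ l * c i $ p * c i $ m * c i $ n) = 0)"

text \<open>h(u), second-order truncated square-root equilibrium shape.\<close>
definition heq :: "('q::finite \<Rightarrow> real^'d::finite) \<Rightarrow> ('q \<Rightarrow> real) \<Rightarrow> real \<Rightarrow> real^'d \<Rightarrow> real^'q" where
  "heq c w cs u = (\<chi> i. sqrt (w i) * (1 + (c i \<bullet> u) / (2 * cs^2) + (c i \<bullet> u)^2 / (8 * cs^4)
                                       - (norm u)^2 / (4 * cs^2)))"

definition geq :: "('q::finite \<Rightarrow> real^'d::finite) \<Rightarrow> ('q \<Rightarrow> real) \<Rightarrow> real \<Rightarrow> real \<times> (real^'d) \<Rightarrow> real^'q" where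
  "geq c w cs = (\<lambda>(\<rho>, u). sqrt \<rho> *\<^sub>R heq c w cs u)"

text \<open>||H||_2 = sup over unit a, b of || (sum_{k,l} H_ikl a_k b_l)_i ||, where H is the
  (constant) Hessian of h; evaluated at 0.\<close>
definition hess_norm :: "('q::finite \<Rightarrow> real^'d::finite) \<Rightarrow> ('q \<Rightarrow> real) \<Rightarrow> real \<Rightarrow> real" where
  "hess_norm c w cs = Sup {norm (frechet_derivative (\<lambda>u. frechet_derivative (heq c w cs) (at u) b) (at 0) a)
                           | a b. norm a = 1 \<and> norm b = 1}"

definition Jbar :: "('q::finite \<Rightarrow> real^'d::finite) \<Rightarrow> ('q \<Rightarrow> real) \<Rightarrow> real \<Rightarrow> real^'d \<Rightarrow> real \<times> (real^'d) \<Rightarrow> real^'q" where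
  "Jbar c w cs uh = (\<lambda>(a, b). a *\<^sub>R heq c w cs uh + frechet_derivative (heq c w cs) (at uh) b)"

definition orth_proj :: "'a::euclidean_space set \<Rightarrow> 'a \<Rightarrow> 'a" where
  "orth_proj S x = (THE p. p \<in> S \<and> (\<forall>v\<in>S. (x - p) \<bullet> v = 0))"

definition Dproj :: "('q::finite \<Rightarrow> real^'d::finite) \<Rightarrow> ('q \<Rightarrow> real) \<Rightarrow> real \<Rightarrow> real^'d \<Rightarrow> real^'q \<Rightarrow> real^'q" where
  "Dproj c w cs uh = orth_proj (range (Jbar c w cs uh))"

definition sigma_min :: "('a::euclidean_space \<Rightarrow> 'b::euclidean_space) \<Rightarrow> real" where
  "sigma_min A = Inf {norm (A z) | z. norm z = 1}"

definition lsq_sol :: "('a::euclidean_space \<Rightarrow> 'b::euclidean_space) \<Rightarrow> 'b \<Rightarrow> 'a \<Rightarrow> bool" where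
  "lsq_sol A y z \<longleftrightarrow> (\<forall>z'. norm (A z - y) \<le> norm (A z' - y))"

definition pinv :: "('a::euclidean_space \<Rightarrow> 'b::euclidean_space) \<Rightarrow> 'b \<Rightarrow> 'a" where
  "pinv A y = (THE z. lsq_sol A y z \<and> (\<forall>z'. lsq_sol A y z' \<longrightarrow> norm z \<le> norm z'))"

definition Eperp :: "('q::finite \<Rightarrow> real^'d::finite) \<Rightarrow> ('q \<Rightarrow> real) \<Rightarrow> real \<Rightarrow> real^'d \<Rightarrow> real^'q \<Rightarrow> real" where
  "Eperp c w cs uh gt = Inf {norm (Dproj c w cs uh gt - geq c w cs (\<rho>, u)) | \<rho> u. \<rho> \<ge> 0}"

definition Delta :: "('q::finite \<Rightarrow> real^'d::finite) \<Rightarrow> ('q \<Rightarrow> real) \<Rightarrow> real \<Rightarrow> real^'d \<Rightarrow> real^'q \<Rightarrow> real \<Rightarrow> real" where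
  "Delta c w cs uh gt \<rho>h = norm (sqrt \<rho>h *\<^sub>R heq c w cs uh - gt)"

definition nabla_g :: "('q::finite \<Rightarrow> real^'d::finite) \<Rightarrow> ('q \<Rightarrow> real) \<Rightarrow> real \<Rightarrow> real \<times> (real^'d) \<Rightarrow> real \<times> (real^'d) \<Rightarrow> real^'q" where
  "nabla_g c w cs x = frechet_derivative (geq c w cs) (at x)"

definition beta :: "('q::finite \<Rightarrow> real^'d::finite) \<Rightarrow> ('q \<Rightarrow> real) \<Rightarrow> real \<Rightarrow> real \<times> (real^'d) \<Rightarrow> real" where
  "beta c w cs x = 1 / sigma_min (nabla_g c w cs x)"

definition Fmap :: "('q::finite \<Rightarrow> real^'d::finite) \<Rightarrow> ('q \<Rightarrow> real) \<Rightarrow> real \<Rightarrow> real^'d \<Rightarrow> real \<times> (real^'d) \<Rightarrow> real^'q" where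
  "Fmap c w cs uh = (\<lambda>x. Dproj c w cs uh (geq c w cs x))"

definition z0 :: "('q::finite \<Rightarrow> real^'d::finite) \<Rightarrow> ('q \<Rightarrow> real) \<Rightarrow> real \<Rightarrow> real^'d \<Rightarrow> real^'q \<Rightarrow> real \<Rightarrow> real \<times> (real^'d)" where
  "z0 c w cs uh gt \<rho>h = pinv (nabla_g c w cs (\<rho>h, uh)) (Fmap c w cs uh (\<rho>h, uh) - Dproj c w cs uh gt)"

definition NK_conditions :: "('q::finite \<Rightarrow> real^'d::finite) \<Rightarrow> ('q \<Rightarrow> real) \<Rightarrow> real \<Rightarrow> real^'d \<Rightarrow> real^'q \<Rightarrow> real \<Rightarrow> real \<Rightarrow> bool" where
  "NK_conditions c w cs uh gt \<rho>h \<mu> \<longleftrightarrow>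
     (let r = norm (z0 c w cs uh gt \<rho>h);
          B = ball ((\<rho>h, uh) - z0 c w cs uh gt \<rho>h) r;
          DF = (\<lambda>x. frechet_derivative (Fmap c w cs uh) (at x))
      in B \<subseteq> {0<..} \<times> UNIV \<and>
         (\<forall>x\<in>B. \<forall>y\<in>B. onorm (\<lambda>v. DF x v - DF y v) \<le> \<mu> * norm (x - y)) \<and>
         2 * beta c w cs (\<rho>h, uh) * \<mu> * r \<le> 1)"

end

theory Submission
  imports Defs
begin

(* Let s = sqrt rho_h, h = h(u_h) and L = Dh(u_h). The tangent space range Jbar = {a h + L b}
   contains g(rho_h, u_h) = s h, so the projection y = D g~ = a h + L b lies within Delta of s h.
   The Jacobian of g at (rho_h, u_h) is (p, v) |-> Jbar (p / 2s, s v), hence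
   z0 = -(2s (a - s), b / s) and |z0| <= beta Delta. The Newton-Kantorovich ball lies in rho > 0
   only if rho_h - fst z0 >= |z0|, which forces a >= 3s/4. Because h is quadratic,
   g(a^2, u_h + b/a) = y + H(b, b) / 2a exactly, so E_perp <= ||H|| |b|^2 / 2a
   <= (2/3) ||H|| beta^2 Delta^2 s. The second claim is the minimisation of the
   quadratic |t h - g~|^2 in t = sqrt rho_h. *)

lemma orth_proj_unique:
  fixes S :: "'a::euclidean_space set"
  assumes "subspace S" "p \<in> S" "\<forall>v\<in>S. (x - p) \<bullet> v = 0" "p' \<in> S" "\<forall>v\<in>S. (x - p') \<bullet> v = 0"
  shows "p = p'"
proof -
  have "p - p' \<in> S" using assms subspace_diff by blast
  then have "(x - p') \<bullet> (p - p') - (x - p) \<bullet> (p - p') = 0" using assms by simp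
  then have "(p - p') \<bullet> (p - p') = 0" by (simp add: algebra_simps)
  then show ?thesis by simp
qed

lemma orth_proj_mem_orthogonal:
  fixes S :: "'a::euclidean_space set"
  assumes "subspace S"
  shows "orth_proj S x \<in> S" and "\<forall>v\<in>S. (x - orth_proj S x) \<bullet> v = 0"
proof -
  obtain y z where "y \<in> span S" "\<And>v. v \<in> span S \<Longrightarrow> orthogonal z v" "x = y + z"
    using orthogonal_subspace_decomp_exists by blast
  moreover have "span S = S" using assms by simp
  ultimately have "\<exists>p. p \<in> S \<and> (\<forall>v\<in>S. (x - p) \<bullet> v = 0)"
    by (intro exI[of _ y]) (auto simp: orthogonal_def)
  then have "\<exists>!p. p \<in> S \<and> (\<forall>v\<in>S. (x - p) \<bullet> v = 0)"
    using orth_proj_unique[OF assms] by blast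
  then have "orth_proj S x \<in> S \<and> (\<forall>v\<in>S. (x - orth_proj S x) \<bullet> v = 0)"
    unfolding orth_proj_def by (rule theI')
  then show "orth_proj S x \<in> S" and "\<forall>v\<in>S. (x - orth_proj S x) \<bullet> v = 0" by auto
qed

lemma orth_proj_fixed:
  fixes S :: "'a::euclidean_space set"
  assumes "subspace S" "x \<in> S"
  shows "orth_proj S x = x"
  using orth_proj_mem_orthogonal[OF assms(1), of x] orth_proj_unique[OF assms(1)] assms(2) by simp

lemma norm_orth_proj_diff_le:
  fixes S :: "'a::euclidean_space set"
  assumes "subspace S" "s \<in> S"
  shows "norm (orth_proj S x - s) \<le> norm (x - s)"
proof -
  let ?p = "orth_proj S x"
  have "?p - s \<in> S" using orth_proj_mem_orthogonal[OF assms(1)] assms(2) subspace_diff[OF assms(1)] by blast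
  then have "orthogonal (x - ?p) (?p - s)"
    using orth_proj_mem_orthogonal(2)[OF assms(1), of x] unfolding orthogonal_def by blast
  then have "(norm (x - s))^2 = (norm (x - ?p))^2 + (norm (?p - s))^2"
    using norm_add_Pythagorean[of "x - ?p" "?p - s"] by simp
  then show ?thesis by (simp add: power2_le_imp_le)
qed

lemma sigma_min_pos_bound:
  fixes A :: "'a::euclidean_space \<Rightarrow> 'b::euclidean_space"
  assumes "linear A" "inj A"
  shows "sigma_min A > 0" and "sigma_min A * norm x \<le> norm (A x)"
proof -
  obtain B where B: "B > 0" "\<And>x. B * norm x \<le> norm (A x)"
    using linear_inj_bounded_below_pos[OF assms] by blast
  obtain e :: 'a where "e \<in> Basis" by (meson ex_in_conv nonempty_Basis)
  then have "{norm (A z) | z. norm z = 1} \<noteq> {}" by (metis (mono_tags) empty_Collect_eq norm_Basis)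
  moreover have "B \<le> norm (A z)" if "norm z = 1" for z using B(2)[of z] that by simp
  ultimately have "B \<le> sigma_min A" unfolding sigma_min_def by (intro cInf_greatest) auto
  then show "sigma_min A > 0" using B(1) by simp
  show "sigma_min A * norm x \<le> norm (A x)"
  proof (cases "x = 0")
    case True then show ?thesis by simp
  next
    case False
    have "sigma_min A \<le> norm (A ((1 / norm x) *\<^sub>R x))" unfolding sigma_min_def
      using False by (intro cInf_lower) (auto intro: bdd_belowI[of _ 0])
    also have "\<dots> = norm (A x) / norm x"
      by (simp add: linear_scale[OF assms(1)])
    finally show ?thesis using False by (simp add: field_simps)
  qed
qed

lemma pinv_inj_apply:
  assumes "inj A"
  shows "pinv A (A z) = z"
proof -
  have "lsq_sol A (A z) z' \<longleftrightarrow> z' = z" for z'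
  proof
    assume "lsq_sol A (A z) z'"
    then have "norm (A z' - A z) \<le> 0" unfolding lsq_sol_def by (metis diff_self norm_zero)
    then show "z' = z" using assms by (simp add: inj_eq)
  qed (simp add: lsq_sol_def)
  then show ?thesis unfolding pinv_def by auto
qed

lemma power2_norm_scaleR_diff:
  fixes h g :: "'a::real_inner"
  shows "(norm (t *\<^sub>R h - g))^2 = t^2 * (norm h)^2 - 2 * t * (h \<bullet> g) + (norm g)^2"
  unfolding power2_norm_eq_inner
  by (simp add: inner_commute power2_eq_square algebra_simps)

lemma norm_scaleR_diff_ge_projection:
  fixes h g :: "'a::real_inner"
  shows "norm ((h \<bullet> g / (norm h)^2) *\<^sub>R h - g) \<le> norm (t *\<^sub>R h - g)"
proof (cases "h = 0")
  case False
  then have "(norm (t *\<^sub>R h - g))^2 - (norm ((h \<bullet> g / (norm h)^2) *\<^sub>R h - g))^2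
      = (norm h)^2 * (t - h \<bullet> g / (norm h)^2)^2"
    unfolding power2_norm_scaleR_diff by (simp add: field_simps power2_eq_square)
  then show ?thesis
    by (metis diff_ge_0_iff_ge norm_ge_zero power2_le_imp_le zero_le_mult_iff zero_le_power2)
qed simp

lemma norm_scaleR_diff_projection:
  fixes h g :: "'a::real_inner"
  assumes "cos \<theta> = h \<bullet> g / (norm h * norm g)"
  shows "norm ((h \<bullet> g / (norm h)^2) *\<^sub>R h - g) = norm g * \<bar>sin \<theta>\<bar>"
proof (cases "h = 0 \<or> g = 0")
  case True
  then show ?thesis using assms sin_cos_squared_add[of \<theta>] by (auto simp: abs_square_eq_1)
next
  case False
  then have "(norm ((h \<bullet> g / (norm h)^2) *\<^sub>R h - g))^2 = (norm g)^2 - (h \<bullet> g)^2 / (norm h)^2"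
    unfolding power2_norm_scaleR_diff by (simp add: field_simps power2_eq_square)
  also have "\<dots> = (norm g)^2 * (1 - (cos \<theta>)^2)"
    unfolding assms using False by (simp add: field_simps power2_eq_square)
  also have "\<dots> = (norm g * \<bar>sin \<theta>\<bar>)^2"
    by (simp add: power_mult_distrib sin_squared_eq)
  finally show ?thesis by simp
qed

lemma optimal_sqrt_scale:
  fixes h g :: "'a::real_inner"
  assumes "h \<bullet> g > 0"
  defines "\<rho>s \<equiv> (h \<bullet> g / (norm h)^2)^2"
  shows "\<rho>s > 0" and "norm (sqrt \<rho>s *\<^sub>R h - g) \<le> norm (sqrt \<rho> *\<^sub>R h - g)"
    and "cos \<theta> = h \<bullet> g / (norm h * norm g) \<Longrightarrow> norm (sqrt \<rho>s *\<^sub>R h - g) = norm g * \<bar>sin \<theta>\<bar>"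
proof -
  have "h \<noteq> 0" using assms(1) by auto
  then have pos: "h \<bullet> g / (norm h)^2 > 0" using assms(1) by simp
  then show "\<rho>s > 0" unfolding \<rho>s_def by (rule zero_less_power)
  have "sqrt \<rho>s = h \<bullet> g / (norm h)^2" using pos assms(1) by (simp add: \<rho>s_def)
  then show "norm (sqrt \<rho>s *\<^sub>R h - g) \<le> norm (sqrt \<rho> *\<^sub>R h - g)"
    and "cos \<theta> = h \<bullet> g / (norm h * norm g) \<Longrightarrow> norm (sqrt \<rho>s *\<^sub>R h - g) = norm g * \<bar>sin \<theta>\<bar>"
    by (simp_all add: norm_scaleR_diff_ge_projection norm_scaleR_diff_projection)
qed

definition heq_diff :: "('q::finite \<Rightarrow> real^'d::finite) \<Rightarrow> ('q \<Rightarrow> real) \<Rightarrow> real \<Rightarrow> real^'d \<Rightarrow> real^'d \<Rightarrow> real^'q" where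
  "heq_diff c w cs u v = (\<chi> i. sqrt (w i) * ((c i \<bullet> v) / (2 * cs^2) + 2 * (c i \<bullet> u) * (c i \<bullet> v) / (8 * cs^4)
                                              - 2 * (u \<bullet> v) / (4 * cs^2)))"

definition heq_hess :: "('q::finite \<Rightarrow> real^'d::finite) \<Rightarrow> ('q \<Rightarrow> real) \<Rightarrow> real \<Rightarrow> real^'d \<Rightarrow> real^'d \<Rightarrow> real^'q" where
  "heq_hess c w cs a b = (\<chi> i. sqrt (w i) * (2 * (c i \<bullet> a) * (c i \<bullet> b) / (8 * cs^4) - 2 * (a \<bullet> b) / (4 * cs^2)))"

lemma heq_nth:
  "heq c w cs u $ i = sqrt (w i) * (1 + (c i \<bullet> u) / (2 * cs^2) + (c i \<bullet> u)^2 / (8 * cs^4) - (u \<bullet> u) / (4 * cs^2))"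
  by (simp add: heq_def power2_norm_eq_inner)

lemma has_derivative_heq:
  fixes c :: "'q::finite \<Rightarrow> real^'d::finite"
  shows "(heq c w cs has_derivative heq_diff c w cs u) (at u)"
proof (subst has_derivative_componentwise_within, intro ballI)
  fix e :: "real^'q" assume "e \<in> Basis"
  then obtain j where e: "e = axis j 1" by (auto simp: Basis_vec_def)
  show "((\<lambda>x. heq c w cs x \<bullet> e) has_derivative (\<lambda>x. heq_diff c w cs u x \<bullet> e)) (at u)"
    unfolding e inner_axis heq_nth heq_diff_def vec_lambda_beta divide_inverse
    by (rule derivative_eq_intros refl | simp)+ (simp add: algebra_simps inner_commute)
qed

lemma has_derivative_heq_diff:
  fixes c :: "'q::finite \<Rightarrow> real^'d::finite"
  shows "((\<lambda>u. heq_diff c w cs u b) has_derivative (\<lambda>a. heq_hess c w cs a b)) (at u)"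
proof (subst has_derivative_componentwise_within, intro ballI)
  fix e :: "real^'q" assume "e \<in> Basis"
  then obtain j where e: "e = axis j 1" by (auto simp: Basis_vec_def)
  show "((\<lambda>x. heq_diff c w cs x b \<bullet> e) has_derivative (\<lambda>x. heq_hess c w cs x b \<bullet> e)) (at u)"
    unfolding e inner_axis heq_hess_def heq_diff_def vec_lambda_beta divide_inverse
    by (rule derivative_eq_intros refl | simp)+
qed

lemma linear_heq_diff: "linear (heq_diff c w cs u)"
  using has_derivative_heq has_derivative_linear by blast

lemma heq_add: "heq c w cs (u + v) = heq c w cs u + heq_diff c w cs u v + (1/2) *\<^sub>R heq_hess c w cs v v"
proof -
  have expand: "1 + (A + B) / (2 * cs^2) + (A + B)^2 / (8 * cs^4) - (2 * X + (U + V)) / (4 * cs^2)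
      = (1 + A / (2 * cs^2) + A^2 / (8 * cs^4) - U / (4 * cs^2))
        + (B / (2 * cs^2) + 2 * A * B / (8 * cs^4) - 2 * X / (4 * cs^2))
        + (1/2) * (2 * B * B / (8 * cs^4) - 2 * V / (4 * cs^2))" for A B U V X :: real
    by (cases "cs = 0") (simp_all add: field_simps power2_eq_square)
  have "heq c w cs (u + v) $ i = (heq c w cs u + heq_diff c w cs u v + (1/2) *\<^sub>R heq_hess c w cs v v) $ i"
    for i
    using arg_cong[OF expand[where A = "c i \<bullet> u" and B = "c i \<bullet> v" and U = "u \<bullet> u" and X = "u \<bullet> v"
      and V = "v \<bullet> v"], of "(*) (sqrt (w i))"]
    by (simp add: heq_nth heq_diff_def heq_hess_def inner_add_right inner_add_left inner_commute
        distrib_left)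
  then show ?thesis by (simp add: vec_eq_iff)
qed

lemma heq_hess_scaleR: "heq_hess c w cs (t *\<^sub>R a) (t *\<^sub>R a) = t^2 *\<^sub>R heq_hess c w cs a a"
  by (simp add: vec_eq_iff heq_hess_def power2_eq_square field_simps)

lemma hess_norm_eq_Sup: "hess_norm c w cs = Sup {norm (heq_hess c w cs a b) | a b. norm a = 1 \<and> norm b = 1}"
proof -
  have "frechet_derivative (\<lambda>u. frechet_derivative (heq c w cs) (at u) b) (at 0) a = heq_hess c w cs a b"
    for a b
  proof -
    have "(\<lambda>u. frechet_derivative (heq c w cs) (at u) b) = (\<lambda>u. heq_diff c w cs u b)"
      using frechet_derivative_at[OF has_derivative_heq] by metis
    then show ?thesis using frechet_derivative_at[OF has_derivative_heq_diff, of c w cs b 0] by metis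
  qed
  then show ?thesis unfolding hess_norm_def by simp
qed

lemma bdd_above_norm_heq_hess:
  fixes c :: "'q::finite \<Rightarrow> real^'d::finite"
  shows "bdd_above {norm (heq_hess c w cs a b) | a b. norm a = 1 \<and> norm b = 1}"
proof -
  let ?f = "\<lambda>p::(real^'d) \<times> (real^'d). norm (heq_hess c w cs (fst p) (snd p))"
  let ?K = "sphere (0::real^'d) 1 \<times> sphere (0::real^'d) 1"
  have "continuous_on ?K ?f"
    unfolding heq_hess_def divide_inverse by (intro continuous_intros continuous_on_vec_lambda)
  then have bdd: "bdd_above (?f ` ?K)"
    by (intro bounded_imp_bdd_above compact_imp_bounded compact_continuous_image compact_Times compact_sphere)
  have "norm (heq_hess c w cs a b) \<in> ?f ` ?K" if "norm a = 1" "norm b = 1" for a b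
    using that by (intro image_eqI[of _ _ "(a, b)"]) auto
  then show ?thesis by (intro bdd_above_mono[OF bdd]) blast
qed

lemma norm_heq_hess_le_hess_norm:
  assumes "norm a = 1" "norm b = 1"
  shows "norm (heq_hess c w cs a b) \<le> hess_norm c w cs"
  unfolding hess_norm_eq_Sup using assms by (intro cSup_upper bdd_above_norm_heq_hess) blast

lemma hess_norm_nonneg: "0 \<le> hess_norm (c :: 'q::finite \<Rightarrow> real^'d::finite) w cs"
proof -
  obtain e :: "real^'d" where "e \<in> Basis" by (meson ex_in_conv nonempty_Basis)
  then have "norm e = 1" by simp
  then show ?thesis using norm_heq_hess_le_hess_norm[of e e c w cs] norm_ge_zero order_trans by blast
qed

lemma norm_heq_hess_le: "norm (heq_hess c w cs v v) \<le> hess_norm c w cs * (norm v)^2"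
proof (cases "v = 0")
  case True
  then show ?thesis using heq_hess_scaleR[of c w cs 0 v] by simp
next
  case False
  define a where "a = (1 / norm v) *\<^sub>R v"
  have "norm a = 1" using False by (simp add: a_def)
  then have "norm (heq_hess c w cs a a) \<le> hess_norm c w cs" using norm_heq_hess_le_hess_norm by blast
  moreover have "heq_hess c w cs v v = (norm v)^2 *\<^sub>R heq_hess c w cs a a"
    using heq_hess_scaleR[of c w cs "norm v" a] False by (simp add: a_def)
  ultimately show ?thesis
    using mult_right_mono[of "norm (heq_hess c w cs a a)" "hess_norm c w cs" "(norm v)^2"]
    by (simp add: mult.commute)
qed

lemma Jbar_eq: "Jbar c w cs u = (\<lambda>(a, b). a *\<^sub>R heq c w cs u + heq_diff c w cs u b)"
  unfolding Jbar_def frechet_derivative_at[OF has_derivative_heq, symmetric] ..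

lemma linear_Jbar: "linear (Jbar c w cs u)"
  unfolding Jbar_eq using linear_heq_diff[of c w cs u]
  by (intro linearI) (auto simp: linear_add linear_scale algebra_simps)

lemma subspace_range_Jbar: "subspace (range (Jbar c w cs u))"
  using linear_subspace_image[OF linear_Jbar subspace_UNIV] by simp

lemma has_derivative_geq:
  assumes "\<rho> > 0"
  shows "(geq c w cs has_derivative
           (\<lambda>p. Jbar c w cs u (fst p / (2 * sqrt \<rho>), sqrt \<rho> *\<^sub>R snd p))) (at (\<rho>, u))"
proof -
  have "((\<lambda>x. sqrt (fst x) *\<^sub>R heq c w cs (snd x)) has_derivative
          (\<lambda>p. sqrt \<rho> *\<^sub>R heq_diff c w cs u (snd p) + (fst p / (2 * sqrt \<rho>)) *\<^sub>R heq c w cs u)) (at (\<rho>, u))"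
    using assms
    by (auto intro!: derivative_eq_intros has_derivative_compose[OF _ has_derivative_heq]
        simp: field_simps)
  moreover have "geq c w cs = (\<lambda>x. sqrt (fst x) *\<^sub>R heq c w cs (snd x))"
    by (auto simp: geq_def)
  ultimately show ?thesis
    by (simp add: Jbar_eq linear_scale[OF linear_heq_diff] add.commute)
qed

lemma nabla_g_eq:
  assumes "\<rho> > 0"
  shows "nabla_g c w cs (\<rho>, u) = (\<lambda>p. Jbar c w cs u (fst p / (2 * sqrt \<rho>), sqrt \<rho> *\<^sub>R snd p))"
  unfolding nabla_g_def by (rule frechet_derivative_at[OF has_derivative_geq[OF assms], symmetric])

lemma linear_nabla_g:
  assumes "\<rho> > 0"
  shows "linear (nabla_g c w cs (\<rho>, u))"
  unfolding nabla_g_eq[OF assms] by (rule has_derivative_linear[OF has_derivative_geq[OF assms]])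

lemma inj_nabla_g:
  assumes "inj (Jbar c w cs u)" "\<rho> > 0"
  shows "inj (nabla_g c w cs (\<rho>, u))"
proof (rule injI)
  fix p q assume "nabla_g c w cs (\<rho>, u) p = nabla_g c w cs (\<rho>, u) q"
  then have "(fst p / (2 * sqrt \<rho>), sqrt \<rho> *\<^sub>R snd p) = (fst q / (2 * sqrt \<rho>), sqrt \<rho> *\<^sub>R snd q)"
    using assms by (simp add: nabla_g_eq inj_eq)
  then show "p = q" using assms(2) by (simp add: prod_eq_iff)
qed

lemma geq_scaled_shift:
  assumes "a > 0"
  shows "geq c w cs (a^2, u + (1 / a) *\<^sub>R b)
           = Jbar c w cs u (a, b) + (1 / (2 * a)) *\<^sub>R heq_hess c w cs b b"
proof -
  have "geq c w cs (a^2, u + (1 / a) *\<^sub>R b) = a *\<^sub>R heq c w cs (u + (1 / a) *\<^sub>R b)"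
    using assms by (simp add: geq_def)
  also have "\<dots> = Jbar c w cs u (a, b) + (1 / (2 * a)) *\<^sub>R heq_hess c w cs b b"
    using assms
    by (simp add: heq_add heq_hess_scaleR Jbar_eq linear_scale[OF linear_heq_diff] scaleR_add_right
        power2_eq_square)
  finally show ?thesis .
qed

lemma Eperp_le: "\<rho> \<ge> 0 \<Longrightarrow> Eperp c w cs uh gt \<le> norm (Dproj c w cs uh gt - geq c w cs (\<rho>, u))"
  unfolding Eperp_def by (rule cInf_lower) (auto intro: bdd_belowI[of _ 0])

lemma Eperp_le_curvature:
  assumes "a > 0" and "Dproj c w cs uh gt = Jbar c w cs uh (a, b)"
  shows "Eperp c w cs uh gt \<le> hess_norm c w cs * (norm b)^2 / (2 * a)"
proof -
  have "Eperp c w cs uh gt \<le> norm (Dproj c w cs uh gt - geq c w cs (a^2, uh + (1 / a) *\<^sub>R b))"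
    by (rule Eperp_le) simp
  also have "\<dots> = norm (heq_hess c w cs b b) / (2 * a)"
    using assms by (simp add: geq_scaled_shift)
  also have "\<dots> \<le> hess_norm c w cs * (norm b)^2 / (2 * a)"
    using assms(1) by (intro divide_right_mono norm_heq_hess_le) simp
  finally show ?thesis .
qed

lemma ball_subset_half_space_imp_le:
  fixes x :: "real \<times> 'a::real_normed_vector"
  assumes "ball x r \<subseteq> {0<..} \<times> UNIV" "r > 0"
  shows "r \<le> fst x"
proof (rule ccontr)
  assume "\<not> r \<le> fst x"
  moreover have "x \<in> {0<..} \<times> UNIV" using assms by auto
  ultimately have "x - (fst x, 0) \<in> ball x r" by (simp add: dist_norm mem_Times_iff)
  then have "x - (fst x, 0) \<in> {0<..} \<times> UNIV" using assms(1) by blast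
  then show False by (simp add: mem_Times_iff)
qed

lemma NK_ball_condition:
  assumes "NK_conditions c w cs uh gt \<rho>h \<mu>" and "\<rho>h > 0"
  shows "norm (z0 c w cs uh gt \<rho>h) \<le> \<rho>h - fst (z0 c w cs uh gt \<rho>h)"
proof (cases "z0 c w cs uh gt \<rho>h = 0")
  case False
  have "ball ((\<rho>h, uh) - z0 c w cs uh gt \<rho>h) (norm (z0 c w cs uh gt \<rho>h)) \<subseteq> {0<..} \<times> UNIV"
    using assms(1) by (simp add: NK_conditions_def Let_def)
  then show ?thesis using ball_subset_half_space_imp_le False by fastforce
qed (use \<open>\<rho>h > 0\<close> in simp)

lemma z0_eq_and_norm_le:
  fixes c :: "'q::finite \<Rightarrow> real^'d::finite"
  assumes rank: "inj (Jbar c w cs uh)" and "\<rho>h > 0"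
    and proj: "Dproj c w cs uh gt = Jbar c w cs uh (a, b)"
  defines "z \<equiv> (2 * sqrt \<rho>h * (a - sqrt \<rho>h), (1 / sqrt \<rho>h) *\<^sub>R b)"
  shows "z0 c w cs uh gt \<rho>h = - z" and "norm z \<le> beta c w cs (\<rho>h, uh) * Delta c w cs uh gt \<rho>h"
proof -
  let ?G = "nabla_g c w cs (\<rho>h, uh)"
  let ?g = "geq c w cs (\<rho>h, uh)"
  have linG: "linear ?G" and injG: "inj ?G"
    using rank \<open>\<rho>h > 0\<close> by (simp_all add: linear_nabla_g inj_nabla_g)
  have g_Jbar: "?g = Jbar c w cs uh (sqrt \<rho>h, 0)"
    by (simp add: geq_def Jbar_eq linear_0[OF linear_heq_diff])
  then have g_in: "?g \<in> range (Jbar c w cs uh)" by simp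
  have Gz: "?G z = Dproj c w cs uh gt - ?g"
    using \<open>\<rho>h > 0\<close>
    by (simp add: z_def nabla_g_eq proj g_Jbar linear_diff[OF linear_Jbar, symmetric])
  have "Fmap c w cs uh (\<rho>h, uh) = ?g"
    unfolding Fmap_def Dproj_def by (rule orth_proj_fixed[OF subspace_range_Jbar g_in])
  then have "Fmap c w cs uh (\<rho>h, uh) - Dproj c w cs uh gt = ?G (- z)"
    by (simp add: Gz linear_neg[OF linG])
  then show "z0 c w cs uh gt \<rho>h = - z"
    unfolding z0_def by (simp add: pinv_inj_apply[OF injG])
  have "sigma_min ?G * norm z \<le> norm (Dproj c w cs uh gt - ?g)"
    using sigma_min_pos_bound(2)[OF linG injG, of z] Gz by simp
  also have "\<dots> \<le> Delta c w cs uh gt \<rho>h"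
    using norm_orth_proj_diff_le[OF subspace_range_Jbar g_in, of gt]
    by (simp add: Dproj_def Delta_def geq_def norm_minus_commute)
  finally show "norm z \<le> beta c w cs (\<rho>h, uh) * Delta c w cs uh gt \<rho>h"
    using sigma_min_pos_bound(1)[OF linG injG] by (simp add: beta_def nabla_g_def field_simps)
qed

lemma Eperp_le_NK_bound:
  fixes c :: "'q::finite \<Rightarrow> real^'d::finite"
  assumes rank: "inj (Jbar c w cs uh)" and "\<rho>h > 0" and NK: "NK_conditions c w cs uh gt \<rho>h \<mu>"
  defines "\<beta> \<equiv> beta c w cs (\<rho>h, uh)" and "\<Delta> \<equiv> Delta c w cs uh gt \<rho>h"
  shows "Eperp c w cs uh gt \<le> 2 * \<beta>^2 * \<Delta>^2 * hess_norm c w cs * sqrt (\<rho>h + 2 * \<beta> * \<Delta>)"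
proof -
  define s where "s = sqrt \<rho>h"
  have s: "s > 0" "s * s = \<rho>h" using \<open>\<rho>h > 0\<close> by (auto simp: s_def)
  obtain a b where proj: "Dproj c w cs uh gt = Jbar c w cs uh (a, b)"
    using orth_proj_mem_orthogonal(1)[OF subspace_range_Jbar[of c w cs uh], of gt] unfolding Dproj_def
    by (metis rangeE surj_pair)
  define z where "z = (2 * s * (a - s), (1 / s) *\<^sub>R b)"
  have z0: "z0 c w cs uh gt \<rho>h = - z" and z_le: "norm z \<le> \<beta> * \<Delta>"
    using z0_eq_and_norm_le[OF rank \<open>\<rho>h > 0\<close> proj] by (simp_all add: z_def s_def \<beta>_def \<Delta>_def)
  have "norm z \<le> \<rho>h + fst z" using NK_ball_condition[OF NK \<open>\<rho>h > 0\<close>] by (simp add: z0)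
  then have "2 * s * (a - s) \<ge> 2 * s * (- s / 4)"
    using norm_fst_le[of "fst z" "snd z"] s by (simp add: z_def)
  then have "- s / 4 \<le> a - s" using s by (subst (asm) mult_le_cancel_left_pos) auto
  then have a_ge: "a \<ge> 3/4 * s" by linarith
  have "norm b = s * norm (snd z)" using s by (simp add: z_def)
  also have "\<dots> \<le> s * (\<beta> * \<Delta>)"
    using norm_snd_le[of "snd z" "fst z"] z_le s by (simp add: order_trans)
  finally have b_le: "norm b \<le> s * (\<beta> * \<Delta>)" .
  have H: "hess_norm c w cs \<ge> 0" by (rule hess_norm_nonneg)
  have \<beta>\<Delta>: "\<beta> * \<Delta> \<ge> 0" using z_le norm_ge_zero[of z] by linarith
  have "Eperp c w cs uh gt \<le> hess_norm c w cs * (norm b)^2 / (2 * a)"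
    using a_ge s by (intro Eperp_le_curvature proj) simp
  also have "\<dots> \<le> hess_norm c w cs * (s * (\<beta> * \<Delta>))^2 / (3/2 * s)"
    using a_ge s H b_le by (intro frac_le mult_left_mono power_mono) auto
  also have "\<dots> = 2/3 * \<beta>^2 * \<Delta>^2 * hess_norm c w cs * s"
    using s by (simp add: field_simps power2_eq_square)
  also have "\<dots> \<le> 2 * \<beta>^2 * \<Delta>^2 * hess_norm c w cs * sqrt (\<rho>h + 2 * \<beta> * \<Delta>)"
  proof (rule mult_mono)
    show "2/3 * \<beta>^2 * \<Delta>^2 * hess_norm c w cs \<le> 2 * \<beta>^2 * \<Delta>^2 * hess_norm c w cs"
      using H by (intro mult_right_mono) auto
    show "s \<le> sqrt (\<rho>h + 2 * \<beta> * \<Delta>)" using \<beta>\<Delta> unfolding s_def by (simp add: mult.assoc)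
  qed (use s H in auto)
  finally show ?thesis .
qed

theorem theorem2:
  fixes c :: "'q::finite \<Rightarrow> real^'d::finite" and w :: "'q \<Rightarrow> real" and cs :: real
    and uh :: "real^'d" and gt :: "real^'q"
  assumes lat: "lattice_isotropic c w cs"
    and rank: "inj (Jbar c w cs uh)"
  shows "(\<forall>\<rho>h \<mu>. \<rho>h > 0 \<and> NK_conditions c w cs uh gt \<rho>h \<mu> \<longrightarrow>
            Eperp c w cs uh gt
              \<le> 2 * (beta c w cs (\<rho>h, uh))^2 * (Delta c w cs uh gt \<rho>h)^2 * hess_norm c w cs
                 * sqrt (\<rho>h + 2 * beta c w cs (\<rho>h, uh) * Delta c w cs uh gt \<rho>h))
       \<and> (heq c w cs uh \<bullet> gt > 0 \<longrightarrow>
            (let \<rho>s = ((heq c w cs uh \<bullet> gt) / (norm (heq c w cs uh))^2)^2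
             in \<rho>s > 0 \<and> (\<forall>\<rho>h>0. Delta c w cs uh gt \<rho>s \<le> Delta c w cs uh gt \<rho>h) \<and>
                (\<forall>\<theta>. cos \<theta> = (heq c w cs uh \<bullet> gt) / (norm (heq c w cs uh) * norm gt)
                      \<longrightarrow> Delta c w cs uh gt \<rho>s = norm gt * \<bar>sin \<theta>\<bar>)))"
  using Eperp_le_NK_bound[OF rank] optimal_sqrt_scale[of "heq c w cs uh" gt]
  unfolding Let_def Delta_def by blast

end
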